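(* Let $(X,\tau)$ be a topological space and let $\delta$ be a quasi-proximity on $X$ compatible with $\tau$ (i.e. $\tau(\delta)=\tau$) such that $\mathcal{V}_\delta$ is transitive. Let $\mathcal{V}\in T(\tau)$ with $\mathcal{V}_\delta\subseteq\mathcal{V}$. Then $\mathcal{V}\in\pi(\delta)$ if and only if for every $N\in\tau$ with $U_N\in\mathcal{V}$ we have $N\in\mathcal{B}(\mathcal{V}_\delta)$.
   Context: Quasi-uniformities and quasi-proximities are in the sense of Fletcher–Lindgren. For a quasi-uniformity $\mathcal{V}$ on $X$, $\tau(\mathcal{V})$ and $\delta(\mathcal{V})$ denote the topology and the quasi-proximity induced by $\mathcal{V}$; $\tau(\delta)$ is the topology induced by a quasi-proximity $\delta$. A quasi-uniformity $\mathcal{V}$ on $(X,\tau)$ is compatible if $\tau(\mathcal{V})=\tau$; it is transitive if it has a base of transitive entourages ($U\circ U\subseteq U$). $T(\tau)$ denotes the set of all compatible transitive quasi-uniformities on $(X,\tau)$. For a quasi-proximity $\delta$, $\pi(\delta)=\{\mathcal{V}:\mathcal{V}$ a quasi-uniformity on $X$ with $\delta(\mathcal{V})=\delta\}$; it is nonempty and has a coarsest element, denoted $\mathcal{V}_\delta$, which is totally bounded (and the only totally bounded member of $\pi(\delta)$). For $N\subseteq X$, $U_N=(N\times N)\cup((X\setminus N)\times X)$. For a quasi-uniformity $\mathcal{V}$ compatible with $\tau$, $\mathcal{B}(\mathcal{V})=\{N\in\tau: U_N\in\mathcal{V}\}$; when $\mathcal{V}$ is totally bounded and transitive this is an l-base,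 i.e. a base for $\tau$ closed under finite unions and finite intersections and containing $\emptyset$ and $X$. *)

theory Defs
  imports "HOL-Analysis.Analysis"
begin

definition quasi_uniformity :: "'a set \<Rightarrow> ('a \<times> 'a) set set \<Rightarrow> bool" where
  "quasi_uniformity X \<V> \<longleftrightarrow>
     \<V> \<subseteq> Pow (X \<times> X) \<and> \<V> \<noteq> {} \<and>
     (\<forall>U\<in>\<V>. \<forall>W. U \<subseteq> W \<and> W \<subseteq> X \<times> X \<longrightarrow> W \<in> \<V>) \<and>
     (\<forall>U\<in>\<V>. \<forall>W\<in>\<V>. U \<inter> W \<in> \<V>) \<and>
     (\<forall>U\<in>\<V>. Id_on X \<subseteq> U) \<and>
     (\<forall>U\<in>\<V>. \<exists>W\<in>\<V>. W O W \<subseteq> U)"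

definition qu_open :: "'a set \<Rightarrow> ('a \<times> 'a) set set \<Rightarrow> 'a set \<Rightarrow> bool" where
  "qu_open X \<V> G \<longleftrightarrow> G \<subseteq> X \<and> (\<forall>x\<in>G. \<exists>U\<in>\<V>. U `` {x} \<subseteq> G)"

definition qu_compatible :: "'a topology \<Rightarrow> ('a \<times> 'a) set set \<Rightarrow> bool" where
  "qu_compatible T \<V> \<longleftrightarrow> (\<forall>G. openin T G \<longleftrightarrow> qu_open (topspace T) \<V> G)"

definition qu_transitive :: "('a \<times> 'a) set set \<Rightarrow> bool" where
  "qu_transitive \<V> \<longleftrightarrow> (\<forall>U\<in>\<V>. \<exists>W\<in>\<V>. W \<subseteq> U \<and> W O W \<subseteq> W)"

definition Trans_qu :: "'a topology \<Rightarrow> ('a \<times> 'a) set set set" where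
  "Trans_qu T = {\<V>. quasi_uniformity (topspace T) \<V> \<and> qu_compatible T \<V> \<and> qu_transitive \<V>}"

definition quasi_proximity :: "'a set \<Rightarrow> ('a set \<Rightarrow> 'a set \<Rightarrow> bool) \<Rightarrow> bool" where
  "quasi_proximity X \<delta> \<longleftrightarrow>
     (\<forall>A B. \<delta> A B \<longrightarrow> A \<subseteq> X \<and> B \<subseteq> X) \<and>
     (\<forall>A\<subseteq>X. \<not> \<delta> A {} \<and> \<not> \<delta> {} A) \<and>
     (\<forall>A\<subseteq>X. \<forall>B\<subseteq>X. \<forall>C\<subseteq>X. \<delta> A (B \<union> C) \<longleftrightarrow> \<delta> A B \<or> \<delta> A C) \<and>
     (\<forall>A\<subseteq>X. \<forall>B\<subseteq>X. \<forall>C\<subseteq>X. \<delta> (A \<union> B) C \<longleftrightarrow> \<delta> A C \<or> \<delta> B C) \<and>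
     (\<forall>x\<in>X. \<delta> {x} {x}) \<and>
     (\<forall>A\<subseteq>X. \<forall>B\<subseteq>X. \<not> \<delta> A B \<longrightarrow> (\<exists>C\<subseteq>X. \<not> \<delta> A C \<and> \<not> \<delta> (X - C) B))"

definition qp_open :: "'a set \<Rightarrow> ('a set \<Rightarrow> 'a set \<Rightarrow> bool) \<Rightarrow> 'a set \<Rightarrow> bool" where
  "qp_open X \<delta> G \<longleftrightarrow> G \<subseteq> X \<and> (\<forall>x\<in>G. \<not> \<delta> {x} (X - G))"

definition qu_proximity :: "'a set \<Rightarrow> ('a \<times> 'a) set set \<Rightarrow> 'a set \<Rightarrow> 'a set \<Rightarrow> bool" where
  "qu_proximity X \<V> A B \<longleftrightarrow> A \<subseteq> X \<and> B \<subseteq> X \<and> (\<forall>U\<in>\<V>. (A \<times> B) \<inter> U \<noteq> {})"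

definition prox_class :: "'a set \<Rightarrow> ('a set \<Rightarrow> 'a set \<Rightarrow> bool) \<Rightarrow> ('a \<times> 'a) set set set" where
  "prox_class X \<delta> = {\<V>. quasi_uniformity X \<V> \<and> qu_proximity X \<V> = \<delta>}"

definition coarsest_qu :: "'a set \<Rightarrow> ('a set \<Rightarrow> 'a set \<Rightarrow> bool) \<Rightarrow> ('a \<times> 'a) set set" where
  "coarsest_qu X \<delta> = (THE \<V>. \<V> \<in> prox_class X \<delta> \<and> (\<forall>\<W>\<in>prox_class X \<delta>. \<V> \<subseteq> \<W>))"

definition U_set :: "'a set \<Rightarrow> 'a set \<Rightarrow> ('a \<times> 'a) set" where
  "U_set X N = (N \<times> N) \<union> ((X - N) \<times> X)"

definition B_set :: "'a topology \<Rightarrow> ('a \<times> 'a) set set \<Rightarrow> 'a set set" where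
  "B_set T \<V> = {N. openin T N \<and> U_set (topspace T) N \<in> \<V>}"

end

theory Submission
  imports Defs
begin

text \<open>
  \<open>\<V>\<^sub>\<delta>\<close> is generated by the entourages \<open>X \<times> X - A \<times> B\<close> with \<open>A\<close> and \<open>B\<close> \<open>\<delta>\<close>-far, and
  \<open>U\<^sub>N = X \<times> X - N \<times> (X - N)\<close>; so for any member of \<open>\<pi>(\<delta>)\<close> the sets \<open>N\<close> with \<open>U\<^sub>N\<close> in it
  are exactly those \<open>\<delta>\<close>-far from their complement, which gives the forward direction.
  Conversely, if \<open>A\<close> and \<open>B\<close> are far for a transitive \<open>\<V>\<close>, witnessed by a transitive
  entourage \<open>W\<close>, then \<open>N = W``A\<close> is \<open>\<V>\<close>-open with \<open>U\<^sub>N \<supseteq> W\<close>; the hypothesis puts \<open>U\<^sub>N\<close>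
  into \<open>\<V>\<^sub>\<delta>\<close>, so \<open>A\<close> and \<open>B\<close> are already \<open>\<delta>\<close>-far.
\<close>

lemma quasi_proximity_subset:
  "quasi_proximity X \<delta> \<Longrightarrow> \<delta> A B \<Longrightarrow> A \<subseteq> X \<and> B \<subseteq> X"
  by (simp add: quasi_proximity_def)

lemma quasi_proximity_empty:
  "quasi_proximity X \<delta> \<Longrightarrow> A \<subseteq> X \<Longrightarrow> \<not> \<delta> A {} \<and> \<not> \<delta> {} A"
  by (simp add: quasi_proximity_def)

lemma quasi_proximity_Un_Un:
  assumes "quasi_proximity X \<delta>" "A1 \<subseteq> X" "A2 \<subseteq> X" "B1 \<subseteq> X" "B2 \<subseteq> X"
  shows "\<delta> (A1 \<union> A2) (B1 \<union> B2) \<longleftrightarrow> \<delta> A1 B1 \<or> \<delta> A1 B2 \<or> \<delta> A2 B1 \<or> \<delta> A2 B2"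
  using assms by (auto simp: quasi_proximity_def)

lemma quasi_proximity_mono:
  assumes qp: "quasi_proximity X \<delta>" and "\<delta> A B" "A \<subseteq> A'" "B \<subseteq> B'" "A' \<subseteq> X" "B' \<subseteq> X"
  shows "\<delta> A' B'"
proof -
  have "A \<subseteq> X" "B \<subseteq> X" using quasi_proximity_subset[OF qp \<open>\<delta> A B\<close>] by auto
  then have "\<delta> (A \<union> A') (B \<union> B')"
    using quasi_proximity_Un_Un[OF qp] assms by blast
  moreover have "A \<union> A' = A'" "B \<union> B' = B'" using assms by auto
  ultimately show ?thesis by simp
qed

lemma quasi_proximity_common_point:
  assumes qp: "quasi_proximity X \<delta>" and "x \<in> A" "x \<in> B" "A \<subseteq> X" "B \<subseteq> X"
  shows "\<delta> A B"
proof -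
  have "\<delta> {x} {x}" using qp assms by (simp add: quasi_proximity_def subset_eq)
  then show ?thesis using quasi_proximity_mono[OF qp] assms by blast
qed

lemma quasi_proximity_split:
  "quasi_proximity X \<delta> \<Longrightarrow> A \<subseteq> X \<Longrightarrow> B \<subseteq> X \<Longrightarrow> \<not> \<delta> A B \<Longrightarrow>
    \<exists>C\<subseteq>X. \<not> \<delta> A C \<and> \<not> \<delta> (X - C) B"
  by (simp add: quasi_proximity_def)

definition far_pairs :: "'a set \<Rightarrow> ('a set \<Rightarrow> 'a set \<Rightarrow> bool) \<Rightarrow> ('a set \<times> 'a set) set" where
  "far_pairs X \<delta> = {(A, B). A \<subseteq> X \<and> B \<subseteq> X \<and> \<not> \<delta> A B}"

lemma not_proximal_if_covered:
  assumes qp: "quasi_proximity X \<delta>" and "finite F" "F \<subseteq> far_pairs X \<delta>"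
  shows "A \<subseteq> X \<Longrightarrow> B \<subseteq> X \<Longrightarrow> A \<times> B \<subseteq> (\<Union>(P, Q)\<in>F. P \<times> Q) \<Longrightarrow> \<not> \<delta> A B"
  using assms(2,3)
proof (induction F arbitrary: A B rule: finite_induct)
  case empty
  then have "A = {} \<or> B = {}" by blast
  then show ?case using quasi_proximity_empty[OF qp] empty by blast
next
  case (insert p F)
  obtain P Q where p: "p = (P, Q)" by (cases p)
  have PQ: "P \<subseteq> X" "Q \<subseteq> X" "\<not> \<delta> P Q"
    using insert.prems(4) p unfolding far_pairs_def by auto
  have cover: "A \<times> B \<subseteq> P \<times> Q \<union> (\<Union>(P', Q')\<in>F. P' \<times> Q')"
    using insert.prems(3) p by simp
  have far_part: "\<not> \<delta> A' B'"
    if "A' \<subseteq> A" "B' \<subseteq> B" "A' \<inter> P = {} \<or> B' \<inter> Q = {}" for A' B'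
  proof (rule insert.IH)
    show "A' \<times> B' \<subseteq> (\<Union>(P', Q')\<in>F. P' \<times> Q')"
      using cover that by blast
  qed (use that insert.prems in auto)
  have "A \<inter> P \<subseteq> X" "A - P \<subseteq> X" "B \<inter> Q \<subseteq> X" "B - Q \<subseteq> X"
    using insert.prems(1,2) by auto
  moreover have "\<not> \<delta> (A \<inter> P) (B \<inter> Q)"
    using quasi_proximity_mono[OF qp _ _ _ PQ(1,2)] PQ(3) by blast
  moreover have "\<not> \<delta> (A \<inter> P) (B - Q)" "\<not> \<delta> (A - P) (B \<inter> Q)" "\<not> \<delta> (A - P) (B - Q)"
    by (rule far_part; blast)+
  ultimately have "\<not> \<delta> ((A \<inter> P) \<union> (A - P)) ((B \<inter> Q) \<union> (B - Q))"
    by (subst quasi_proximity_Un_Un[OF qp]) auto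
  moreover have "(A \<inter> P) \<union> (A - P) = A" "(B \<inter> Q) \<union> (B - Q) = B" by auto
  ultimately show ?case by simp
qed

lemma quasi_uniformity_subset: "quasi_uniformity X \<V> \<Longrightarrow> U \<in> \<V> \<Longrightarrow> U \<subseteq> X \<times> X"
  by (auto simp: quasi_uniformity_def)

lemma quasi_uniformity_upward:
  "quasi_uniformity X \<V> \<Longrightarrow> U \<in> \<V> \<Longrightarrow> U \<subseteq> W \<Longrightarrow> W \<subseteq> X \<times> X \<Longrightarrow> W \<in> \<V>"
  by (auto simp: quasi_uniformity_def)

lemma quasi_uniformity_Int: "quasi_uniformity X \<V> \<Longrightarrow> U \<in> \<V> \<Longrightarrow> W \<in> \<V> \<Longrightarrow> U \<inter> W \<in> \<V>"
  by (auto simp: quasi_uniformity_def)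

lemma quasi_uniformity_Id_on: "quasi_uniformity X \<V> \<Longrightarrow> U \<in> \<V> \<Longrightarrow> Id_on X \<subseteq> U"
  by (auto simp: quasi_uniformity_def)

lemma quasi_uniformity_top: "quasi_uniformity X \<V> \<Longrightarrow> X \<times> X \<in> \<V>"
  using quasi_uniformity_subset by (metis all_not_in_conv order_refl quasi_uniformity_def)

lemma quasi_uniformity_Inter:
  assumes q: "quasi_uniformity X \<V>" and "finite F"
  shows "(\<And>p. p \<in> F \<Longrightarrow> f p \<in> \<V>) \<Longrightarrow> X \<times> X \<inter> \<Inter> (f ` F) \<in> \<V>"
  using assms(2)
proof (induction F rule: finite_induct)
  case empty
  then show ?case using quasi_uniformity_top[OF q] by simp
next
  case (insert p F)
  have "X \<times> X \<inter> \<Inter> (f ` insert p F) = f p \<inter> (X \<times> X \<inter> \<Inter> (f ` F))" by auto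
  then show ?case using insert quasi_uniformity_Int[OF q] by simp
qed

lemma diff_Times_mem_if_not_qu_proximity:
  assumes q: "quasi_uniformity X \<V>" and "A \<subseteq> X" "B \<subseteq> X" "\<not> qu_proximity X \<V> A B"
  shows "X \<times> X - A \<times> B \<in> \<V>"
proof -
  obtain U where U: "U \<in> \<V>" "(A \<times> B) \<inter> U = {}"
    using assms(2-4) unfolding qu_proximity_def by auto
  have "U \<subseteq> X \<times> X - A \<times> B" using quasi_uniformity_subset[OF q U(1)] U(2) by blast
  then show ?thesis using quasi_uniformity_upward[OF q U(1)] by blast
qed

text \<open>This is \<open>\<V>\<^sub>\<delta>\<close>, the quasi-uniformity with subbase the entourages \<open>X \<times> X - A \<times> B\<close>
  for \<open>\<delta>\<close>-far \<open>A\<close>, \<open>B\<close>.\<close>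
definition proximal_qu :: "'a set \<Rightarrow> ('a set \<Rightarrow> 'a set \<Rightarrow> bool) \<Rightarrow> ('a \<times> 'a) set set" where
  "proximal_qu X \<delta> =
    {U. U \<subseteq> X \<times> X \<and> (\<exists>F\<subseteq>far_pairs X \<delta>. finite F \<and> X \<times> X - U \<subseteq> (\<Union>(A, B)\<in>F. A \<times> B))}"

lemma proximal_quI:
  "U \<subseteq> X \<times> X \<Longrightarrow> F \<subseteq> far_pairs X \<delta> \<Longrightarrow> finite F \<Longrightarrow> X \<times> X - U \<subseteq> (\<Union>(A, B)\<in>F. A \<times> B) \<Longrightarrow>
    U \<in> proximal_qu X \<delta>"
  unfolding proximal_qu_def by blast

lemma proximal_quE:
  assumes "U \<in> proximal_qu X \<delta>"
  obtains F where "F \<subseteq> far_pairs X \<delta>" "finite F" "X \<times> X - U \<subseteq> (\<Union>(A, B)\<in>F. A \<times> B)"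
  using assms unfolding proximal_qu_def by blast

lemma proximal_qu_subset: "U \<in> proximal_qu X \<delta> \<Longrightarrow> U \<subseteq> X \<times> X"
  unfolding proximal_qu_def by blast

lemma diff_Times_mem_proximal_qu:
  "(A, B) \<in> far_pairs X \<delta> \<Longrightarrow> X \<times> X - A \<times> B \<in> proximal_qu X \<delta>"
  by (rule proximal_quI[of _ _ "{(A, B)}"]) auto

lemma proximal_qu_comp:
  assumes qp: "quasi_proximity X \<delta>" and U: "U \<in> proximal_qu X \<delta>"
  shows "\<exists>W\<in>proximal_qu X \<delta>. W O W \<subseteq> U"
proof -
  obtain F where F: "F \<subseteq> far_pairs X \<delta>" "finite F" "X \<times> X - U \<subseteq> (\<Union>(A, B)\<in>F. A \<times> B)"
    using U by (rule proximal_quE)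
  have far: "fst p \<subseteq> X" "snd p \<subseteq> X" "\<not> \<delta> (fst p) (snd p)" if "p \<in> F" for p
    using subsetD[OF F(1) that] by (auto simp: far_pairs_def case_prod_beta)
  have "\<exists>C\<subseteq>X. \<not> \<delta> (fst p) C \<and> \<not> \<delta> (X - C) (snd p)" if "p \<in> F" for p
    using quasi_proximity_split[OF qp far[OF that]] .
  then obtain C where C: "\<And>p. p \<in> F \<Longrightarrow> C p \<subseteq> X \<and> \<not> \<delta> (fst p) (C p) \<and> \<not> \<delta> (X - C p) (snd p)"
    by metis
  define G where "G = (\<lambda>p. (fst p, C p)) ` F \<union> (\<lambda>p. (X - C p, snd p)) ` F"
  define W where "W = X \<times> X - (\<Union>(A, B)\<in>G. A \<times> B)"
  have "G \<subseteq> far_pairs X \<delta>"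
  proof
    fix g assume "g \<in> G"
    then obtain p where p: "p \<in> F" "g = (fst p, C p) \<or> g = (X - C p, snd p)"
      unfolding G_def by blast
    then show "g \<in> far_pairs X \<delta>" using far[OF p(1)] C[OF p(1)] unfolding far_pairs_def by auto
  qed
  moreover have "finite G" using F(2) unfolding G_def by simp
  ultimately have "W \<in> proximal_qu X \<delta>" unfolding W_def by (intro proximal_quI) auto
  moreover have "W O W \<subseteq> U"
  proof
    fix q assume "q \<in> W O W"
    then obtain x y z where q: "q = (x, z)" and xy: "(x, y) \<in> W" and yz: "(y, z) \<in> W"
      by (rule relcompE)
    have "(x, z) \<notin> fst p \<times> snd p" if "p \<in> F" for p
      \<comment> \<open>according as \<open>y \<in> C p\<close> or not, \<open>(x, y)\<close> or \<open>(y, z)\<close> would lie in a rectangle of \<open>G\<close>\<close>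
    proof (cases "y \<in> C p")
      case True
      have "(fst p, C p) \<in> G" using that unfolding G_def by blast
      then show ?thesis using xy[unfolded W_def] True by blast
    next
      case False
      have "(X - C p, snd p) \<in> G" using that unfolding G_def by blast
      then show ?thesis using yz[unfolded W_def] False by blast
    qed
    moreover have "(x, z) \<in> X \<times> X" using xy yz unfolding W_def by auto
    ultimately show "q \<in> U" using F(3) q by fastforce
  qed
  ultimately show ?thesis by blast
qed

lemma quasi_uniformity_proximal_qu:
  assumes qp: "quasi_proximity X \<delta>"
  shows "quasi_uniformity X (proximal_qu X \<delta>)"
  unfolding quasi_uniformity_def
proof (intro conjI ballI allI impI)
  show "proximal_qu X \<delta> \<subseteq> Pow (X \<times> X)" using proximal_qu_subset by blast
  have "X \<times> X \<in> proximal_qu X \<delta>" by (rule proximal_quI[of _ _ "{}"]) auto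
  then show "proximal_qu X \<delta> \<noteq> {}" by blast
next
  fix U W assume "U \<in> proximal_qu X \<delta>" and W: "U \<subseteq> W \<and> W \<subseteq> X \<times> X"
  then obtain F where "F \<subseteq> far_pairs X \<delta>" "finite F" "X \<times> X - U \<subseteq> (\<Union>(A, B)\<in>F. A \<times> B)"
    by (elim proximal_quE)
  then show "W \<in> proximal_qu X \<delta>"
    using W by (intro proximal_quI[of _ _ F]) auto
next
  fix U W assume U: "U \<in> proximal_qu X \<delta>" and W: "W \<in> proximal_qu X \<delta>"
  obtain F where "F \<subseteq> far_pairs X \<delta>" "finite F" "X \<times> X - U \<subseteq> (\<Union>(A, B)\<in>F. A \<times> B)"
    using U by (rule proximal_quE)
  moreover obtain G where "G \<subseteq> far_pairs X \<delta>" "finite G" "X \<times> X - W \<subseteq> (\<Union>(A, B)\<in>G. A \<times> B)"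
    using W by (rule proximal_quE)
  ultimately show "U \<inter> W \<in> proximal_qu X \<delta>"
    using proximal_qu_subset[OF U] by (intro proximal_quI[of _ _ "F \<union> G"]) auto
next
  fix U assume "U \<in> proximal_qu X \<delta>"
  then obtain F where F: "F \<subseteq> far_pairs X \<delta>" "X \<times> X - U \<subseteq> (\<Union>(A, B)\<in>F. A \<times> B)"
    by (elim proximal_quE)
  show "Id_on X \<subseteq> U"
  proof
    fix q assume "q \<in> Id_on X"
    then obtain x where q: "q = (x, x)" "x \<in> X" by blast
    have "(x, x) \<notin> A \<times> B" if "(A, B) \<in> F" for A B
      using quasi_proximity_common_point[OF qp, of x A B] subsetD[OF F(1) that]
      unfolding far_pairs_def by auto
    then show "q \<in> U" using F(2) q by blast
  qed
next
  fix U assume "U \<in> proximal_qu X \<delta>"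
  then show "\<exists>W\<in>proximal_qu X \<delta>. W O W \<subseteq> U" by (rule proximal_qu_comp[OF qp])
qed

lemma qu_proximity_proximal_qu:
  assumes qp: "quasi_proximity X \<delta>"
  shows "qu_proximity X (proximal_qu X \<delta>) = \<delta>"
proof (intro ext iffI)
  fix A B assume near: "qu_proximity X (proximal_qu X \<delta>) A B"
  then have AB: "A \<subseteq> X" "B \<subseteq> X" unfolding qu_proximity_def by auto
  show "\<delta> A B"
  proof (rule ccontr)
    assume "\<not> \<delta> A B"
    with AB have "X \<times> X - A \<times> B \<in> proximal_qu X \<delta>"
      by (intro diff_Times_mem_proximal_qu) (simp add: far_pairs_def)
    moreover have "(A \<times> B) \<inter> (X \<times> X - A \<times> B) = {}" by blast
    ultimately show False using near unfolding qu_proximity_def by blast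
  qed
next
  fix A B assume "\<delta> A B"
  then have AB: "A \<subseteq> X" "B \<subseteq> X" using quasi_proximity_subset[OF qp] by auto
  have "\<not> \<delta> A B" if U: "U \<in> proximal_qu X \<delta>" and disj: "(A \<times> B) \<inter> U = {}" for U
  proof -
    obtain F where F: "F \<subseteq> far_pairs X \<delta>" "finite F" "X \<times> X - U \<subseteq> (\<Union>(A, B)\<in>F. A \<times> B)"
      using U by (rule proximal_quE)
    have "A \<times> B \<subseteq> X \<times> X - U" using disj AB by blast
    then have "A \<times> B \<subseteq> (\<Union>(P, Q)\<in>F. P \<times> Q)" using F(3) by (rule order_trans)
    then show ?thesis using not_proximal_if_covered[OF qp F(2,1) AB] by blast
  qed
  then show "qu_proximity X (proximal_qu X \<delta>) A B"
    using \<open>\<delta> A B\<close> AB unfolding qu_proximity_def by blast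
qed

lemma proximal_qu_subset_prox_class:
  assumes "\<W> \<in> prox_class X \<delta>"
  shows "proximal_qu X \<delta> \<subseteq> \<W>"
proof
  have q: "quasi_uniformity X \<W>" and prox: "qu_proximity X \<W> = \<delta>"
    using assms unfolding prox_class_def by auto
  fix U assume U: "U \<in> proximal_qu X \<delta>"
  then obtain F where F: "F \<subseteq> far_pairs X \<delta>" "finite F" "X \<times> X - U \<subseteq> (\<Union>(A, B)\<in>F. A \<times> B)"
    by (rule proximal_quE)
  have "X \<times> X - fst p \<times> snd p \<in> \<W>" if "p \<in> F" for p
  proof (rule diff_Times_mem_if_not_qu_proximity[OF q])
    show "fst p \<subseteq> X" "snd p \<subseteq> X" "\<not> qu_proximity X \<W> (fst p) (snd p)"
      using subsetD[OF F(1) that] prox by (auto simp: far_pairs_def case_prod_beta)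
  qed
  then have "X \<times> X \<inter> \<Inter> ((\<lambda>p. X \<times> X - fst p \<times> snd p) ` F) \<in> \<W>"
    by (rule quasi_uniformity_Inter[OF q F(2)])
  moreover have "X \<times> X \<inter> \<Inter> ((\<lambda>p. X \<times> X - fst p \<times> snd p) ` F) \<subseteq> U"
  proof
    fix q assume q: "q \<in> X \<times> X \<inter> \<Inter> ((\<lambda>p. X \<times> X - fst p \<times> snd p) ` F)"
    show "q \<in> U"
    proof (rule ccontr)
      assume "q \<notin> U"
      then obtain p where "p \<in> F" "q \<in> fst p \<times> snd p" using F(3) q by auto
      then show False using q by blast
    qed
  qed
  ultimately show "U \<in> \<W>"
    using quasi_uniformity_upward[OF q _ _ proximal_qu_subset[OF U]] by blast
qed

lemma coarsest_qu_eq_proximal_qu: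
  assumes qp: "quasi_proximity X \<delta>"
  shows "coarsest_qu X \<delta> = proximal_qu X \<delta>"
  unfolding coarsest_qu_def
proof (rule the_equality)
  have "proximal_qu X \<delta> \<in> prox_class X \<delta>"
    using quasi_uniformity_proximal_qu[OF qp] qu_proximity_proximal_qu[OF qp]
    unfolding prox_class_def by blast
  then show "proximal_qu X \<delta> \<in> prox_class X \<delta> \<and> (\<forall>\<W>\<in>prox_class X \<delta>. proximal_qu X \<delta> \<subseteq> \<W>)"
    using proximal_qu_subset_prox_class by blast
  fix \<V> assume "\<V> \<in> prox_class X \<delta> \<and> (\<forall>\<W>\<in>prox_class X \<delta>. \<V> \<subseteq> \<W>)"
  then have "proximal_qu X \<delta> \<subseteq> \<V>" "\<V> \<subseteq> proximal_qu X \<delta>"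
    using \<open>proximal_qu X \<delta> \<in> prox_class X \<delta>\<close> proximal_qu_subset_prox_class by blast+
  then show "\<V> = proximal_qu X \<delta>" by (rule subset_antisym[rotated])
qed

lemma coarsest_qu_mem_prox_class:
  "quasi_proximity X \<delta> \<Longrightarrow> coarsest_qu X \<delta> \<in> prox_class X \<delta>"
  unfolding prox_class_def
  by (simp add: coarsest_qu_eq_proximal_qu quasi_uniformity_proximal_qu qu_proximity_proximal_qu)

lemma U_set_eq_diff_Times: "N \<subseteq> X \<Longrightarrow> U_set X N = X \<times> X - N \<times> (X - N)"
  unfolding U_set_def by blast

lemma U_set_mem_iff_not_qu_proximity:
  assumes q: "quasi_uniformity X \<V>" and N: "N \<subseteq> X"
  shows "U_set X N \<in> \<V> \<longleftrightarrow> \<not> qu_proximity X \<V> N (X - N)"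
proof
  assume "U_set X N \<in> \<V>"
  moreover have "N \<times> (X - N) \<inter> U_set X N = {}" unfolding U_set_def by blast
  ultimately show "\<not> qu_proximity X \<V> N (X - N)" unfolding qu_proximity_def by blast
next
  assume "\<not> qu_proximity X \<V> N (X - N)"
  then show "U_set X N \<in> \<V>"
    unfolding U_set_eq_diff_Times[OF N] by (rule diff_Times_mem_if_not_qu_proximity[OF q N Diff_subset])
qed

lemma transitive_qu_separation:
  assumes q: "quasi_uniformity X \<V>" and "qu_transitive \<V>"
    and "A \<subseteq> X" "B \<subseteq> X" "\<not> qu_proximity X \<V> A B"
  shows "\<exists>N. qu_open X \<V> N \<and> A \<subseteq> N \<and> B \<inter> N = {} \<and> U_set X N \<in> \<V>"
proof -
  obtain U where U: "U \<in> \<V>" "(A \<times> B) \<inter> U = {}"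
    using assms(3-5) unfolding qu_proximity_def by auto
  then obtain W where W: "W \<in> \<V>" "W \<subseteq> U" "W O W \<subseteq> W"
    using \<open>qu_transitive \<V>\<close> unfolding qu_transitive_def by blast
  have WX: "W \<subseteq> X \<times> X" and "Id_on X \<subseteq> W"
    using quasi_uniformity_subset[OF q W(1)] quasi_uniformity_Id_on[OF q W(1)] .
  define N where "N = W `` A"
  have W_closed: "y \<in> N" if "x \<in> N" "(x, y) \<in> W" for x y
    using that W(3) unfolding N_def by blast
  have NX: "N \<subseteq> X" using WX unfolding N_def by blast
  have "qu_open X \<V> N"
    unfolding qu_open_def
  proof (intro conjI ballI bexI)
    show "W `` {y} \<subseteq> N" if "y \<in> N" for y using W_closed[OF that] by blast
  qed (rule NX, rule W(1))
  moreover have "A \<subseteq> N" using \<open>Id_on X \<subseteq> W\<close> \<open>A \<subseteq> X\<close> unfolding N_def by blast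
  moreover have "B \<inter> N = {}" using U(2) W(2) unfolding N_def by blast
  moreover have "W \<subseteq> U_set X N"
  proof (rule subrelI)
    fix x y assume xy: "(x, y) \<in> W"
    then have "x \<in> X" "y \<in> X" using WX by auto
    then show "(x, y) \<in> U_set X N"
      using W_closed[OF _ xy] unfolding U_set_def by blast
  qed
  then have "U_set X N \<in> \<V>"
    using quasi_uniformity_upward[OF q W(1)] U_set_eq_diff_Times[OF NX] by blast
  ultimately show ?thesis by blast
qed

lemma qu_proximity_eq_if_U_set_mem:
  assumes q: "quasi_uniformity X \<V>" and "qu_transitive \<V>" and "\<W> \<subseteq> \<V>"
    and U_set_mem: "\<And>N. qu_open X \<V> N \<Longrightarrow> U_set X N \<in> \<V> \<Longrightarrow> U_set X N \<in> \<W>"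
  shows "qu_proximity X \<V> = qu_proximity X \<W>"
proof (intro ext iffI)
  fix A B assume "qu_proximity X \<V> A B"
  then show "qu_proximity X \<W> A B" using \<open>\<W> \<subseteq> \<V>\<close> unfolding qu_proximity_def by blast
next
  fix A B assume near: "qu_proximity X \<W> A B"
  then have AB: "A \<subseteq> X" "B \<subseteq> X" unfolding qu_proximity_def by auto
  show "qu_proximity X \<V> A B"
  proof (rule ccontr)
    assume "\<not> qu_proximity X \<V> A B"
    then obtain N where N: "qu_open X \<V> N" "A \<subseteq> N" "B \<inter> N = {}" "U_set X N \<in> \<V>"
      using transitive_qu_separation[OF q \<open>qu_transitive \<V>\<close> AB] by blast
    then have "U_set X N \<in> \<W>" by (intro U_set_mem)
    moreover have "(A \<times> B) \<inter> U_set X N = {}" using N(2,3) unfolding U_set_def by blast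
    ultimately show False using near unfolding qu_proximity_def by blast
  qed
qed

theorem lemma2p1:
  fixes T :: "'a topology" and \<delta> :: "'a set \<Rightarrow> 'a set \<Rightarrow> bool" and \<V> :: "('a \<times> 'a) set set"
  assumes "quasi_proximity (topspace T) \<delta>"
    and "\<forall>G. openin T G \<longleftrightarrow> qp_open (topspace T) \<delta> G"
    and "qu_transitive (coarsest_qu (topspace T) \<delta>)"
    and "\<V> \<in> Trans_qu T"
    and "coarsest_qu (topspace T) \<delta> \<subseteq> \<V>"
  shows "\<V> \<in> prox_class (topspace T) \<delta> \<longleftrightarrow>
    (\<forall>N. openin T N \<and> U_set (topspace T) N \<in> \<V> \<longrightarrow> N \<in> B_set T (coarsest_qu (topspace T) \<delta>))"
proof -
  let ?X = "topspace T" and ?\<V>\<^sub>\<delta> = "coarsest_qu (topspace T) \<delta>"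
  have q\<delta>: "quasi_uniformity ?X ?\<V>\<^sub>\<delta>" and prox\<delta>: "qu_proximity ?X ?\<V>\<^sub>\<delta> = \<delta>"
    using coarsest_qu_mem_prox_class[OF assms(1)] unfolding prox_class_def by auto
  have q: "quasi_uniformity ?X \<V>" and "qu_transitive \<V>" and "qu_compatible T \<V>"
    using assms(4) unfolding Trans_qu_def by auto
  show ?thesis
  proof
    assume "\<V> \<in> prox_class ?X \<delta>"
    then show "\<forall>N. openin T N \<and> U_set ?X N \<in> \<V> \<longrightarrow> N \<in> B_set T ?\<V>\<^sub>\<delta>"
      using U_set_mem_iff_not_qu_proximity[OF q] U_set_mem_iff_not_qu_proximity[OF q\<delta>] prox\<delta>
      unfolding B_set_def prox_class_def by (auto dest: openin_subset)
  next
    assume "\<forall>N. openin T N \<and> U_set ?X N \<in> \<V> \<longrightarrow> N \<in> B_set T ?\<V>\<^sub>\<delta>"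
    then have "qu_proximity ?X \<V> = qu_proximity ?X ?\<V>\<^sub>\<delta>"
      using \<open>qu_compatible T \<V>\<close> unfolding B_set_def qu_compatible_def
      by (intro qu_proximity_eq_if_U_set_mem[OF q \<open>qu_transitive \<V>\<close> assms(5)]) blast
    then show "\<V> \<in> prox_class ?X \<delta>" using q prox\<delta> unfolding prox_class_def by simp
  qed
qed

end
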